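(* Let $x_i(t)\ge 0$ ($i,t\in[n]$) satisfy $\sum_{i\in[n]}x_i(t)\le 1$ for all $t\in[n]$, and let $\alpha_i$ be the arrival times produced by Discrete-Time Poisson Rounding from $x$. For any positive integer thresholds $(\theta_i)_{i\in[n]}$, $$\Pr\big[\forall i\in[n],\ \alpha_i>2\theta_i\big]\le\exp\Big(-2\sum_{i\in[n]}\sum_{\tau\in[\theta_i]}\bar x_i(\tau)\Big).$$
   Context: Here $[m]=\{1,\dots,m\}$ and $\bar x_i(t)=\frac1t\sum_{t'=1}^{\min\{t,n\}}x_i(t')$ for positive integers $t$ (so $\sum_i\bar x_i(t)\le 1$). Discrete-Time Poisson Rounding: independently at each step $\tau=1,2,\dots$, sample exactly one box $i\in[n]$ with probability $\bar x_i(\lceil\tau/2\rceil)$, or no box with the remaining probability $1-\sum_i\bar x_i(\lceil\tau/2\rceil)$. The arrival time $\alpha_i$ of box $i$ is the first step at which it is sampled ($\infty$ if never). *)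

theory Defs
  imports "HOL-Probability.Probability"
begin

text \<open>Boxes are indexed by 1..n, times t by 1..n. x i t is the LP value.\<close>

definition xbar :: "nat \<Rightarrow> (nat \<Rightarrow> nat \<Rightarrow> real) \<Rightarrow> nat \<Rightarrow> nat \<Rightarrow> real" where
  "xbar n x i t = (1 / real t) * (\<Sum>t'\<in>{1..min t n}. x i t')"

text \<open>Distribution of the outcome of step tau: Some i = box i sampled, None = no box.
  Probability of box i is xbar_i(ceil(tau/2)), where ceil(tau/2) = (tau+1) div 2.
  (Step 0 is unused; the arrival times only look at steps tau >= 1.)\<close>

definition step_pmf :: "nat \<Rightarrow> (nat \<Rightarrow> nat \<Rightarrow> real) \<Rightarrow> nat \<Rightarrow> nat option pmf" where
  "step_pmf n x \<tau> = embed_pmf (\<lambda>s. case s of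
       Some i \<Rightarrow> (if i \<in> {1..n} then xbar n x i ((\<tau> + 1) div 2) else 0)
     | None \<Rightarrow> 1 - (\<Sum>i\<in>{1..n}. xbar n x i ((\<tau> + 1) div 2)))"

definition dtpr :: "nat \<Rightarrow> (nat \<Rightarrow> nat \<Rightarrow> real) \<Rightarrow> (nat \<Rightarrow> nat option) measure" where
  "dtpr n x = (\<Pi>\<^sub>M \<tau>\<in>UNIV. measure_pmf (step_pmf n x \<tau>))"

definition arrival :: "(nat \<Rightarrow> nat option) \<Rightarrow> nat \<Rightarrow> enat" where
  "arrival \<omega> i = (if \<exists>\<tau>\<ge>1. \<omega> \<tau> = Some i
                   then enat (LEAST \<tau>. \<tau> \<ge> 1 \<and> \<omega> \<tau> = Some i) else \<infinity>)"

end

theory Submission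
  imports Defs
begin

text \<open>Box \<open>i\<close> misses its deadline \<open>d i\<close> iff none of the independent steps
  \<open>1, \<dots>, d i\<close> samples it. Hence step \<open>\<tau>\<close> must avoid the set \<open>S \<tau>\<close> of boxes whose
  deadline is at least \<open>\<tau>\<close>, which has probability \<open>1 - p\<^sub>\<tau>(S \<tau>) \<le> exp (- p\<^sub>\<tau>(S \<tau>))\<close>.
  Multiplying over the steps and regrouping the exponent by boxes bounds the probability
  that every box misses its deadline by \<open>exp (- \<Sum>\<^sub>i \<Sum>\<^bsub>\<tau> \<le> d i\<^esub> p\<^sub>\<tau>(i))\<close>. For Poisson
  rounding with \<open>d i = 2 \<theta> i\<close>, the value \<open>xbar i t\<close> is the sampling probability of box \<open>i\<close>
  at both steps \<open>2t - 1\<close> and \<open>2t\<close>, which gives the factor 2.\<close>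

lemma (in prob_space) prob_compl_le_exp:
  assumes "A \<in> events"
  shows "prob (space M - A) \<le> exp (- prob A)"
  using prob_compl[OF assms] exp_ge_add_one_self[of "- prob A"] by simp

lemma enat_less_arrival_iff:
  "enat k < arrival \<omega> i \<longleftrightarrow> (\<forall>\<tau>\<in>{1..k}. \<omega> \<tau> \<noteq> Some i)"
proof (cases "\<exists>\<tau>\<ge>1. \<omega> \<tau> = Some i")
  case True
  define L where "L = (LEAST \<tau>. \<tau> \<ge> 1 \<and> \<omega> \<tau> = Some i)"
  have L: "L \<ge> 1" "\<omega> L = Some i"
    using LeastI_ex[OF True] unfolding L_def by auto
  have L_least: "L \<le> \<tau>" if "\<tau> \<ge> 1" "\<omega> \<tau> = Some i" for \<tau>
    unfolding L_def using that by (intro Least_le) simp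
  have "arrival \<omega> i = enat L"
    using True unfolding arrival_def L_def by simp
  then show ?thesis
    using L L_least by (auto simp: not_less) (meson le_trans not_less)
qed (auto simp: arrival_def)

lemma no_arrival_eq_prod_emb:
  fixes M :: "nat \<Rightarrow> nat option measure"
  assumes space_M: "\<And>\<tau>. space (M \<tau>) = UNIV" and deadlines: "\<And>i. i \<in> I \<Longrightarrow> d i \<le> T"
  shows "{\<omega> \<in> space (\<Pi>\<^sub>M \<tau>\<in>UNIV. M \<tau>). \<forall>i\<in>I. enat (d i) < arrival \<omega> i}
       = prod_emb UNIV M {1..T} (\<Pi>\<^sub>E \<tau>\<in>{1..T}. UNIV - Some ` {i\<in>I. \<tau> \<le> d i})"
proof -
  have "prod_emb UNIV M {1..T} (\<Pi>\<^sub>E \<tau>\<in>{1..T}. UNIV - Some ` {i\<in>I. \<tau> \<le> d i})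
      = {\<omega> \<in> space (\<Pi>\<^sub>M \<tau>\<in>UNIV. M \<tau>). \<forall>\<tau>\<in>{1..T}. \<omega> \<tau> \<notin> Some ` {i\<in>I. \<tau> \<le> d i}}"
    by (auto simp: prod_emb_def space_PiM space_M PiE_iff image_iff)
  also have "\<dots> = {\<omega> \<in> space (\<Pi>\<^sub>M \<tau>\<in>UNIV. M \<tau>). \<forall>i\<in>I. enat (d i) < arrival \<omega> i}"
    unfolding enat_less_arrival_iff using deadlines
    by (intro Collect_cong conj_cong refl) (auto simp: image_iff, meson atLeastAtMost_iff le_trans)
  finally show ?thesis ..
qed

lemma measure_no_arrival_le_exp:
  fixes p :: "nat \<Rightarrow> nat option pmf" and d :: "nat \<Rightarrow> nat"
  defines "P \<equiv> \<Pi>\<^sub>M \<tau>\<in>UNIV. measure_pmf (p \<tau>)"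
  assumes "finite I"
  shows "measure P {\<omega> \<in> space P. \<forall>i\<in>I. enat (d i) < arrival \<omega> i}
         \<le> exp (- (\<Sum>i\<in>I. \<Sum>\<tau>\<in>{1..d i}. pmf (p \<tau>) (Some i)))"
proof -
  interpret product_prob_space "\<lambda>\<tau>. measure_pmf (p \<tau>)" UNIV
    by (intro product_prob_spaceI prob_space_measure_pmf)
  define T where "T = (\<Sum>i\<in>I. d i)"
  define S where "S \<tau> = {i\<in>I. \<tau> \<le> d i}" for \<tau>
  have deadlines: "d i \<le> T" if "i \<in> I" for i
    unfolding T_def using \<open>finite I\<close> that by (intro member_le_sum) auto
  have "measure P {\<omega> \<in> space P. \<forall>i\<in>I. enat (d i) < arrival \<omega> i}
      = measure P (prod_emb UNIV (\<lambda>\<tau>. measure_pmf (p \<tau>)) {1..T} (\<Pi>\<^sub>E \<tau>\<in>{1..T}. UNIV - Some ` S \<tau>))"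
    unfolding P_def S_def using deadlines by (subst no_arrival_eq_prod_emb) auto
  also have "\<dots> = (\<Prod>\<tau>\<in>{1..T}. measure_pmf.prob (p \<tau>) (UNIV - Some ` S \<tau>))"
    unfolding P_def by (rule measure_PiM_emb) auto
  also have "\<dots> \<le> (\<Prod>\<tau>\<in>{1..T}. exp (- measure_pmf.prob (p \<tau>) (Some ` S \<tau>)))"
    using measure_pmf.prob_compl_le_exp by (intro prod_mono) simp
  also have "\<dots> = exp (- (\<Sum>\<tau>\<in>{1..T}. \<Sum>i\<in>S \<tau>. pmf (p \<tau>) (Some i)))"
    using \<open>finite I\<close>
    by (simp add: S_def measure_measure_pmf_finite sum.reindex sum_negf flip: exp_sum)
  also have "(\<Sum>\<tau>\<in>{1..T}. \<Sum>i\<in>S \<tau>. pmf (p \<tau>) (Some i)) = (\<Sum>i\<in>I. \<Sum>\<tau>\<in>{1..d i}. pmf (p \<tau>) (Some i))"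
    unfolding S_def sum.swap_restrict[OF finite_atLeastAtMost \<open>finite I\<close>]
    using deadlines by (intro sum.cong) (auto intro: order_trans)
  finally show ?thesis .
qed

lemma xbar_nonneg:
  assumes "\<And>t. t \<in> {1..n} \<Longrightarrow> x i t \<ge> 0"
  shows "xbar n x i t \<ge> 0"
  unfolding xbar_def using assms by (intro mult_nonneg_nonneg sum_nonneg) auto

lemma sum_xbar_le_1:
  assumes sum_le: "\<And>t. t \<in> {1..n} \<Longrightarrow> (\<Sum>i\<in>{1..n}. x i t) \<le> 1"
  shows "(\<Sum>i\<in>{1..n}. xbar n x i t) \<le> 1"
proof (cases "t = 0")
  case False
  have "(\<Sum>i\<in>{1..n}. xbar n x i t) = (\<Sum>t'\<in>{1..min t n}. \<Sum>i\<in>{1..n}. x i t') / real t"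
    unfolding xbar_def sum_distrib_left[symmetric] by (subst sum.swap) simp
  also have "\<dots> \<le> real (min t n) / real t"
    using sum_le sum_mono[of "{1..min t n}" "\<lambda>t'. \<Sum>i\<in>{1..n}. x i t'" "\<lambda>_. 1"]
    by (intro divide_right_mono) auto
  also have "\<dots> \<le> 1"
    using False by simp
  finally show ?thesis .
qed (simp add: xbar_def)

lemma pmf_step_pmf_Some:
  assumes nonneg: "\<And>i t. i \<in> {1..n} \<Longrightarrow> t \<in> {1..n} \<Longrightarrow> x i t \<ge> 0"
    and sum_le: "\<And>t. t \<in> {1..n} \<Longrightarrow> (\<Sum>i\<in>{1..n}. x i t) \<le> 1"
    and i: "i \<in> {1..n}"
  shows "pmf (step_pmf n x \<tau>) (Some i) = xbar n x i ((\<tau> + 1) div 2)"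
proof -
  define t where "t = (\<tau> + 1) div 2"
  define f where "f = (\<lambda>s. case s of
       Some j \<Rightarrow> if j \<in> {1..n} then xbar n x j t else 0
     | None \<Rightarrow> 1 - (\<Sum>i\<in>{1..n}. xbar n x i t))"
  have f_nonneg: "0 \<le> f s" for s
    using xbar_nonneg[OF nonneg] sum_xbar_le_1[OF sum_le]
    by (auto simp: f_def split: option.splits)
  have "(\<Sum>s\<in>insert None (Some ` {1..n}). f s) = 1"
    by (simp add: f_def sum.reindex)
  moreover have "(\<integral>\<^sup>+s. ennreal (f s) \<partial>count_space UNIV) = (\<Sum>s\<in>insert None (Some ` {1..n}). ennreal (f s))"
    by (rule nn_integral_count_space') (auto simp: f_def split: option.splits)
  ultimately have "(\<integral>\<^sup>+s. ennreal (f s) \<partial>count_space UNIV) = 1"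
    using f_nonneg by (simp add: sum_ennreal)
  then have "pmf (embed_pmf f) (Some i) = f (Some i)"
    using f_nonneg by (intro pmf_embed_pmf) auto
  then show ?thesis
    using i unfolding step_pmf_def f_def t_def by simp
qed

lemma sum_ceil_half:
  fixes f :: "nat \<Rightarrow> 'a::semiring_1"
  shows "(\<Sum>\<tau>\<in>{1..2 * k}. f ((\<tau> + 1) div 2)) = 2 * (\<Sum>t\<in>{1..k}. f t)"
proof (induction k)
  case (Suc k)
  have "{1..2 * Suc k} = insert (2 * k + 2) (insert (2 * k + 1) {1..2 * k})"
    by auto
  then show ?case
    using Suc by (simp add: mult_2 add_ac)
qed simp

theorem lemma3p5:
  fixes n :: nat and x :: "nat \<Rightarrow> nat \<Rightarrow> real" and \<theta> :: "nat \<Rightarrow> nat"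
  assumes nonneg: "\<And>i t. i \<in> {1..n} \<Longrightarrow> t \<in> {1..n} \<Longrightarrow> x i t \<ge> 0"
    and sum_le: "\<And>t. t \<in> {1..n} \<Longrightarrow> (\<Sum>i\<in>{1..n}. x i t) \<le> 1"
    and theta_pos: "\<And>i. i \<in> {1..n} \<Longrightarrow> \<theta> i \<ge> 1"
  shows "measure (dtpr n x)
           {\<omega> \<in> space (dtpr n x). \<forall>i\<in>{1..n}. arrival \<omega> i > enat (2 * \<theta> i)}
         \<le> exp (- 2 * (\<Sum>i\<in>{1..n}. \<Sum>\<tau>\<in>{1..\<theta> i}. xbar n x i \<tau>))"
proof -
  have "measure (dtpr n x) {\<omega> \<in> space (dtpr n x). \<forall>i\<in>{1..n}. enat (2 * \<theta> i) < arrival \<omega> i}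
      \<le> exp (- (\<Sum>i\<in>{1..n}. \<Sum>\<tau>\<in>{1..2 * \<theta> i}. pmf (step_pmf n x \<tau>) (Some i)))"
    unfolding dtpr_def by (rule measure_no_arrival_le_exp) simp
  also have "(\<Sum>i\<in>{1..n}. \<Sum>\<tau>\<in>{1..2 * \<theta> i}. pmf (step_pmf n x \<tau>) (Some i))
      = (\<Sum>i\<in>{1..n}. 2 * (\<Sum>\<tau>\<in>{1..\<theta> i}. xbar n x i \<tau>))"
    using pmf_step_pmf_Some[OF nonneg sum_le] sum_ceil_half[of "xbar n x _"] by (intro sum.cong) simp_all
  also have "\<dots> = 2 * (\<Sum>i\<in>{1..n}. \<Sum>\<tau>\<in>{1..\<theta> i}. xbar n x i \<tau>)"
    by (simp add: sum_distrib_left)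
  finally show ?thesis
    by simp
qed

end
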